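(* Let $H$ be the (complete) history of an execution of the SC-ABD algorithm (described in the context), let $H^{lt}$ be its logical-time history, let $x$ be a register, and let $o_1,o_2$ be operations in $H^{lt}|x$ such that $o_1$ contains an update phase and $o_2$ contains a query phase. If $o_1 <_{H^{lt}|x} o_2$, then $ts(o_1)\le ts(o_2)$.
   Context: System model: $n$ processes $p_1,\dots,p_n$, $\Pi=\{1,\dots,n\}$, asynchronous, reliable links, crash-stop failures, at most $f<n/2$ faulty processes. Registers hold integers, initially $0$; operations READ($r$), WRITE($r,v$); each process has at most one outstanding operation. A history is the sequence of invocation/response events ordered by real time; only complete histories are considered. $H|x$ is the subsequence of events of operations targeting register $x$. For operations $o_1,o_2$ in a sequence $G$ of events, $o_1<_G o_2$ means the response event of $o_1$ precedes the invocation event of $o_2$ in $G$. Algorithm SC-ABD (code for $p_i$). Local variables: logical clock $lt$ (initially $0$); request id $rid$ (initially $0$); map $tvps$ from registers to timestamp-value pairs, initially $((0,0),0)$; set $responses$ (initially empty); boolean $reading$; temporaries $rreg,rval$. Timestamps are pairs (integer, process id), compared lexicographically; timestamp-value pairs are compared by timestamp (then value). Every message carries the sender's current $lt$; "bcast $m$" means send $m$ to every $p_j$, $j\in\Pi$. Handlers: - READ($r$) invoked: $lt\gets lt+1$; $reading\gets true$; $rreg\gets r$; $rid\gets rid+1$; bcast ("query", $lt$, $rid$, $r$). - On ("query", $lt'$, $rid'$, $r$) from $p_j$: $lt\gets\max(lt,lt')+1$; send ("response", $lt$, $rid'$, $tvps[r]$) to $p_j$. - On ("response", $lt'$, $rid'$,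 $tsv'$) from $p_j$ with $rid=rid'$: $lt\gets\max(lt,lt')+1$; $responses\gets responses\cup\{(tsv',j)\}$; if $|responses|=\lfloor n/2\rfloor+1$: let $tsv=(ts,rval)$ be the received pair with maximal timestamp; $responses\gets\{\}$; $rid\gets rid+1$; bcast ("update", $lt$, $rid$, $rreg$, $tsv$). - WRITE($r,v$) invoked: $lt\gets lt+1$; $reading\gets false$; $tsv\gets((lt,i),v)$; $rid\gets rid+1$; bcast ("update", $lt$, $rid$, $r$, $tsv$). - On ("update", $lt'$, $rid'$, $r$, $tsv'$) from $p_j$: $lt\gets\max(lt,lt')+1$; $tvps[r]\gets\max(tvps[r],tsv')$; send ("ack", $lt$, $rid'$) to $p_j$. - On ("ack", $lt'$, $rid'$) from $p_j$ with $rid=rid'$: $lt\gets\max(lt,lt')+1$; $responses\gets responses\cup\{j\}$; if $|responses|=\lfloor n/2\rfloor+1$: $responses\gets\{\}$; $rid\gets rid+1$; if $reading$ return $rval$ else return OK. Phases: the query phase of a read is the broadcast of "query" messages and the collection of a majority of "response" messages; the update phase of an operation is the broadcast of "update" messages and the collection of a majority of "ack" messages. A write has only an update phase; a read has a query phase followed by an update phase. The timestamp $ts(o)$ of an operation $o$ is the timestamp in the pair broadcast in its update phase. Logical time: the logical time of a handler execution is the value assigned to $lt$ on its first line; the logical time of an invocation event is that of the invocation handler, and of a response event that of the handler that returns. The logical-time history $H^{lt}$ is the sequence of the events of $H$ reordered by their logical times, ties broken by the identifier of the process at which the event occurs. *)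

theory Defs
  imports Main "HOL-Library.Multiset" "HOL-Library.Product_Lexorder"
begin

text \<open>Processes are 1..n; registers are identified by naturals; values are integers.
Timestamps are pairs (integer clock, process id) compared lexicographically
(Product_Lexorder); timestamp-value pairs are compared by timestamp, then value.\<close>

type_synonym pid = nat
type_synonym reg = nat
type_synonym tstamp = "nat \<times> nat"
type_synonym tsv = "tstamp \<times> int"

datatype msg =
    Query nat nat reg          (* lt, rid, register *)
  | Response nat nat tsv       (* lt, rid, pair *)
  | Update nat nat reg tsv     (* lt, rid, register, pair *)
  | Ack nat nat                (* lt, rid *)

datatype opkind = Rd reg | Wr reg int
datatype result = RVal int | ROK

fun op_reg :: "opkind \<Rightarrow> reg" where
  "op_reg (Rd r) = r" | "op_reg (Wr r v) = r"

text \<open>History events: process, per-process operation number, operation,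
logical time of the event.\<close>
datatype event =
    EInv pid nat opkind nat
  | ERes pid nat opkind result nat

text \<open>Observations produced by steps: history events and (ghost) records of
the pair broadcast in the update phase of operation (p,k).\<close>
datatype obs = OEv event | OUpd pid nat tsv

record lstate =
  lt :: nat
  rid :: nat
  tvps :: "reg \<Rightarrow> tsv"
  qresps :: "(tsv \<times> pid) set"
  acks :: "pid set"
  reading :: bool
  rreg :: reg
  rval :: int
  busy :: bool                   (* ghost: an operation is outstanding *)
  opc :: nat                     (* ghost: number of invoked operations *)
  curop :: opkind                (* ghost: the outstanding operation *)

definition linit :: lstate where
  "linit = \<lparr> lt = 0, rid = 0, tvps = (\<lambda>_. ((0,0),0)), qresps = {}, acks = {},
            reading = False, rreg = 0, rval = 0, busy = False, opc = 0, curop = Rd 0 \<rparr>"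

record gstate =
  locals :: "pid \<Rightarrow> lstate"
  net :: "(pid \<times> pid \<times> msg) multiset"   (* (sender, receiver, message) in transit *)
  crashed :: "pid set"

definition ginit :: gstate where
  "ginit = \<lparr> locals = (\<lambda>_. linit), net = {#}, crashed = {} \<rparr>"

datatype input = Invoke pid opkind | Deliver pid pid msg | Crash pid

definition bcast :: "nat \<Rightarrow> pid \<Rightarrow> msg \<Rightarrow> (pid \<times> pid \<times> msg) multiset" where
  "bcast n i m = mset (map (\<lambda>k. (i, k, m)) [1..<n+1])"

definition maj :: "nat \<Rightarrow> nat" where
  "maj n = n div 2 + 1"

text \<open>Handler of a delivered message m from j at process i, in local state l.
Returns new local state, messages sent, observations.\<close>
fun handle :: "nat \<Rightarrow> pid \<Rightarrow> pid \<Rightarrow> msg \<Rightarrow> lstate \<Rightarrow>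
               lstate \<times> (pid \<times> pid \<times> msg) multiset \<times> obs list" where
  "handle n j i (Query lt' rid' r) l =
     (let t = max (lt l) lt' + 1 in
      (l\<lparr>lt := t\<rparr>, {# (i, j, Response t rid' (tvps l r)) #}, []))"
| "handle n j i (Response lt' rid' tsv') l =
     (if rid l = rid' then
        (let t = max (lt l) lt' + 1;
             R = qresps l \<union> {(tsv', j)} in
         if card R = maj n then
           (let tsv = Max (fst ` R) in
            (l\<lparr>lt := t, qresps := {}, rval := snd tsv, rid := rid l + 1\<rparr>,
             bcast n i (Update t (rid l + 1) (rreg l) tsv),
             [OUpd i (opc l) tsv]))
         else (l\<lparr>lt := t, qresps := R\<rparr>, {#}, []))
      else (l, {#}, []))"
| "handle n j i (Update lt' rid' r tsv') l =
     (let t = max (lt l) lt' + 1 in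
      (l\<lparr>lt := t, tvps := (tvps l)(r := max (tvps l r) tsv')\<rparr>,
       {# (i, j, Ack t rid') #}, []))"
| "handle n j i (Ack lt' rid') l =
     (if rid l = rid' then
        (let t = max (lt l) lt' + 1;
             A = acks l \<union> {j} in
         if card A = maj n then
           (l\<lparr>lt := t, acks := {}, rid := rid l + 1, busy := False\<rparr>, {#},
            [OEv (ERes i (opc l) (curop l) (if reading l then RVal (rval l) else ROK) t)])
         else (l\<lparr>lt := t, acks := A\<rparr>, {#}, []))
      else (l, {#}, []))"

fun invoke :: "nat \<Rightarrow> pid \<Rightarrow> opkind \<Rightarrow> lstate \<Rightarrow>
               lstate \<times> (pid \<times> pid \<times> msg) multiset \<times> obs list" where
  "invoke n i (Rd r) l =
     (let t = lt l + 1; k = opc l + 1 in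
      (l\<lparr>lt := t, reading := True, rreg := r, rid := rid l + 1,
         busy := True, opc := k, curop := Rd r\<rparr>,
       bcast n i (Query t (rid l + 1) r),
       [OEv (EInv i k (Rd r) t)]))"
| "invoke n i (Wr r v) l =
     (let t = lt l + 1; k = opc l + 1; tsv = ((t, i), v) in
      (l\<lparr>lt := t, reading := False, rid := rid l + 1,
         busy := True, opc := k, curop := Wr r v\<rparr>,
       bcast n i (Update t (rid l + 1) r tsv),
       [OEv (EInv i k (Wr r v) t), OUpd i k tsv]))"

text \<open>One step of the asynchronous system with n processes and at most f crashes.
None means the input is not enabled.\<close>
fun step :: "nat \<Rightarrow> nat \<Rightarrow> gstate \<Rightarrow> input \<Rightarrow> (gstate \<times> obs list) option" where
  "step n f s (Invoke i op) =
     (if i \<in> {1..n} \<and> i \<notin> crashed s \<and> \<not> busy (locals s i) then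
        (case invoke n i op (locals s i) of (l', ms, os) \<Rightarrow>
           Some (s\<lparr>locals := (locals s)(i := l'), net := net s + ms\<rparr>, os))
      else None)"
| "step n f s (Deliver j i m) =
     (if (j, i, m) \<in># net s \<and> i \<notin> crashed s then
        (case handle n j i m (locals s i) of (l', ms, os) \<Rightarrow>
           Some (s\<lparr>locals := (locals s)(i := l'),
                   net := (net s - {# (j, i, m) #}) + ms\<rparr>, os))
      else None)"
| "step n f s (Crash i) =
     (if i \<in> {1..n} \<and> i \<notin> crashed s \<and> card (crashed s) < f then
        Some (s\<lparr>crashed := crashed s \<union> {i}\<rparr>, [])
      else None)"

fun execs :: "nat \<Rightarrow> nat \<Rightarrow> gstate \<Rightarrow> input list \<Rightarrow> (gstate \<times> obs list) option" where
  "execs n f s [] = Some (s, [])"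
| "execs n f s (x # xs) =
     (case step n f s x of
        None \<Rightarrow> None
      | Some (s', os) \<Rightarrow>
          (case execs n f s' xs of
             None \<Rightarrow> None
           | Some (s'', os') \<Rightarrow> Some (s'', os @ os')))"

text \<open>The history H: events in real-time (step) order.\<close>
definition hist :: "obs list \<Rightarrow> event list" where
  "hist os = [e. OEv e \<leftarrow> os]"

fun ev_lt :: "event \<Rightarrow> nat" where
  "ev_lt (EInv p k op t) = t" | "ev_lt (ERes p k op r t) = t"
fun ev_proc :: "event \<Rightarrow> pid" where
  "ev_proc (EInv p k op t) = p" | "ev_proc (ERes p k op r t) = p"
fun ev_opkind :: "event \<Rightarrow> opkind" where
  "ev_opkind (EInv p k op t) = op" | "ev_opkind (ERes p k op r t) = op"
fun ev_opid :: "event \<Rightarrow> pid \<times> nat" where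
  "ev_opid (EInv p k op t) = (p, k)" | "ev_opid (ERes p k op r t) = (p, k)"

definition ev_reg :: "event \<Rightarrow> reg" where
  "ev_reg e = op_reg (ev_opkind e)"

fun is_inv_of :: "event \<Rightarrow> pid \<times> nat \<Rightarrow> bool" where
  "is_inv_of (EInv p k op t) op_id = ((p, k) = op_id)" | "is_inv_of (ERes p k op r t) op_id = False"
fun is_res_of :: "event \<Rightarrow> pid \<times> nat \<Rightarrow> bool" where
  "is_res_of (EInv p k op t) op_id = False" | "is_res_of (ERes p k op r t) op_id = ((p, k) = op_id)"

definition complete :: "event list \<Rightarrow> bool" where
  "complete H \<longleftrightarrow> (\<forall>e \<in> set H. \<forall>op_id. is_inv_of e op_id \<longrightarrow> (\<exists>e' \<in> set H. is_res_of e' op_id))"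

definition Hlt :: "event list \<Rightarrow> event list" where
  "Hlt H = sort_key (\<lambda>e. (ev_lt e, ev_proc e)) H"

definition restr :: "reg \<Rightarrow> event list \<Rightarrow> event list" where
  "restr x H = filter (\<lambda>e. ev_reg e = x) H"

definition op_in :: "event list \<Rightarrow> pid \<times> nat \<Rightarrow> bool" where
  "op_in G op_id \<longleftrightarrow> (\<exists>e \<in> set G. ev_opid e = op_id)"

definition prec :: "event list \<Rightarrow> pid \<times> nat \<Rightarrow> pid \<times> nat \<Rightarrow> bool" where
  "prec G o1 o2 \<longleftrightarrow> (\<exists>i j. i < j \<and> j < length G \<and> is_res_of (G ! i) o1 \<and> is_inv_of (G ! j) o2)"

definition has_update_phase :: "obs list \<Rightarrow> pid \<times> nat \<Rightarrow> bool" where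
  "has_update_phase os op_id \<longleftrightarrow> (\<exists>tsv. OUpd (fst op_id) (snd op_id) tsv \<in> set os)"

definition has_query_phase :: "event list \<Rightarrow> pid \<times> nat \<Rightarrow> bool" where
  "has_query_phase H op_id \<longleftrightarrow> (\<exists>e \<in> set H. is_inv_of e op_id \<and> (\<exists>r. ev_opkind e = Rd r))"

definition ts_of :: "obs list \<Rightarrow> pid \<times> nat \<Rightarrow> tstamp" where
  "ts_of os op_id = fst (THE tsv. OUpd (fst op_id) (snd op_id) tsv \<in> set os)"

end

theory Submission
  imports Defs
begin

text \<open>
  The argument is an invariant of the reachable states, strengthened by ghost records of handler
  executions: which process applied which update, and which process answered which query, at
  which logical time.  Two quorum properties carry the proof.  When an operation completes at
  logical time \<open>t\<close>, a majority of processes has applied its pair at logical times below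
  \<open>t\<close>; and the pair chosen by a read invoked at logical time \<open>t'\<close> dominates the answers that
  a majority of processes gave at logical times above \<open>t'\<close>.  If the response of \<open>o\<^sub>1\<close>
  precedes the invocation of \<open>o\<^sub>2\<close> in logical time, the two majorities share a process that
  applied the pair of \<open>o\<^sub>1\<close> before it answered \<open>o\<^sub>2\<close>; stored pairs only grow, so the pair
  of \<open>o\<^sub>2\<close> dominates that of \<open>o\<^sub>1\<close>.
\<close>

(* Timestamp-value pairs are nested tuples; splitting quantifiers over them only gets in the way. *)
declare split_paired_All [simp del] split_paired_Ex [simp del]

section \<open>Majority quorums\<close>

definition quorum :: "nat \<Rightarrow> (pid \<Rightarrow> bool) \<Rightarrow> bool" where
  "quorum n P \<longleftrightarrow> (\<exists>Q \<subseteq> {1..n}. card Q = maj n \<and> (\<forall>j \<in> Q. P j))"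

lemma quorum_mono: "quorum n P \<Longrightarrow> (\<And>j. P j \<Longrightarrow> P' j) \<Longrightarrow> quorum n P'"
  unfolding quorum_def by blast

lemma quorums_intersect:
  assumes "quorum n P" and "quorum n P'"
  obtains j where "P j" and "P' j"
proof -
  obtain Q Q' where Q: "Q \<subseteq> {1..n}" "card Q = maj n" "\<forall>j \<in> Q. P j"
    and Q': "Q' \<subseteq> {1..n}" "card Q' = maj n" "\<forall>j \<in> Q'. P' j"
    using assms unfolding quorum_def by blast
  have "card (Q \<union> Q') \<le> n"
    using card_mono[of "{1..n}" "Q \<union> Q'"] Q(1) Q'(1) by simp
  then have "Q \<inter> Q' \<noteq> {}"
    using card_Un_disjoint[of Q Q'] finite_subset[OF Q(1)] finite_subset[OF Q'(1)] Q(2) Q'(2)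
    unfolding maj_def by fastforce
  then show ?thesis
    using Q(3) Q'(3) that by blast
qed

section \<open>Ghost records and the invariant\<close>

text \<open>\<open>Applied p a r tsv\<close>: \<open>p\<close> handled an update of \<open>r\<close> carrying \<open>tsv\<close> at logical time
  \<open>a\<close>; \<open>Answered p q r v\<close>: \<open>p\<close> answered a query on \<open>r\<close> with \<open>v\<close> at logical time \<open>q\<close>;
  \<open>UpdateSent i \<rho> r tsv\<close> and \<open>QuerySent i \<rho> r t\<close>: \<open>i\<close> broadcast an update, or a query
  of an operation invoked at logical time \<open>t\<close>, with request id \<open>\<rho>\<close>.\<close>

datatype ghost =
    Applied pid nat reg tsv
  | Answered pid nat reg tsv
  | UpdateSent pid nat reg tsv
  | QuerySent pid nat reg nat

type_synonym network = "(pid \<times> pid \<times> msg) multiset"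

fun token_msg :: "pid \<Rightarrow> pid \<Rightarrow> nat \<Rightarrow> pid \<times> pid \<times> msg \<Rightarrow> bool" where
  "token_msg i j \<rho> (a, b, Query t \<rho>' r) \<longleftrightarrow> a = i \<and> b = j \<and> \<rho>' = \<rho>"
| "token_msg i j \<rho> (a, b, Response q \<rho>' v) \<longleftrightarrow> a = j \<and> b = i \<and> \<rho>' = \<rho>"
| "token_msg i j \<rho> (a, b, Update t \<rho>' r tsv) \<longleftrightarrow> False"
| "token_msg i j \<rho> (a, b, Ack t \<rho>') \<longleftrightarrow> False"

text \<open>The query of round \<open>\<rho>\<close> from \<open>i\<close> to \<open>j\<close>, the response of \<open>j\<close> to it, and the entry
  of \<open>j\<close> in the response set of \<open>i\<close> are successive forms of one token; since at most one
  token exists, no process contributes twice to the responses of a round.\<close>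

definition tokens :: "network \<Rightarrow> (pid \<Rightarrow> lstate) \<Rightarrow> pid \<Rightarrow> pid \<Rightarrow> nat \<Rightarrow> nat" where
  "tokens N L i j \<rho> = size (filter_mset (token_msg i j \<rho>) N)
     + (if \<rho> = rid (L i) \<and> j \<in> snd ` qresps (L i) then 1 else 0)"

definition querying :: "obs set \<Rightarrow> (pid \<Rightarrow> lstate) \<Rightarrow> pid \<Rightarrow> bool" where
  "querying Ob L i \<longleftrightarrow> busy (L i) \<and> (\<nexists>tsv. OUpd i (opc (L i)) tsv \<in> Ob)"

definition updating :: "obs set \<Rightarrow> (pid \<Rightarrow> lstate) \<Rightarrow> pid \<Rightarrow> bool" where
  "updating Ob L i \<longleftrightarrow> busy (L i) \<and> (\<exists>tsv. OUpd i (opc (L i)) tsv \<in> Ob)"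

fun justified :: "nat \<Rightarrow> ghost set \<Rightarrow> pid \<times> pid \<times> msg \<Rightarrow> bool" where
  "justified n G (a, b, Query t \<rho> r) \<longleftrightarrow> b \<in> {1..n} \<and> QuerySent a \<rho> r t \<in> G"
| "justified n G (a, b, Update t \<rho> r tsv) \<longleftrightarrow> b \<in> {1..n} \<and> UpdateSent a \<rho> r tsv \<in> G"
| "justified n G (a, b, Response q \<rho> v) \<longleftrightarrow>
     (\<exists>r t. Answered a q r v \<in> G \<and> QuerySent b \<rho> r t \<in> G \<and> t < q)"
| "justified n G (a, b, Ack t \<rho>) \<longleftrightarrow> (\<exists>r tsv. Applied a t r tsv \<in> G \<and> UpdateSent b \<rho> r tsv \<in> G)"

definition messages_justified :: "nat \<Rightarrow> network \<Rightarrow> ghost set \<Rightarrow> bool" where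
  "messages_justified n N G \<longleftrightarrow> (\<forall>x \<in># N. justified n G x)"

definition applied_in_store :: "nat \<Rightarrow> (pid \<Rightarrow> lstate) \<Rightarrow> ghost set \<Rightarrow> bool" where
  "applied_in_store n L G \<longleftrightarrow>
     (\<forall>p a r tsv. Applied p a r tsv \<in> G \<longrightarrow> p \<in> {1..n} \<and> a \<le> lt (L p) \<and> tsv \<le> tvps (L p) r)"

definition answered_in_past :: "nat \<Rightarrow> (pid \<Rightarrow> lstate) \<Rightarrow> ghost set \<Rightarrow> bool" where
  "answered_in_past n L G \<longleftrightarrow> (\<forall>p q r v. Answered p q r v \<in> G \<longrightarrow> p \<in> {1..n} \<and> q \<le> lt (L p))"

definition applied_before_answered :: "ghost set \<Rightarrow> bool" where
  "applied_before_answered G \<longleftrightarrow>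
     (\<forall>p a r tsv q v. Applied p a r tsv \<in> G \<longrightarrow> Answered p q r v \<in> G \<longrightarrow> a < q \<longrightarrow> tsv \<le> v)"

definition update_round_current :: "(pid \<Rightarrow> lstate) \<Rightarrow> ghost set \<Rightarrow> obs set \<Rightarrow> bool" where
  "update_round_current L G Ob \<longleftrightarrow>
     (\<forall>i \<rho> r tsv. UpdateSent i \<rho> r tsv \<in> G \<longrightarrow> \<rho> \<le> rid (L i) \<and>
        (\<rho> = rid (L i) \<longrightarrow> updating Ob L i \<and> r = op_reg (curop (L i)) \<and> OUpd i (opc (L i)) tsv \<in> Ob))"

definition query_round_current :: "(pid \<Rightarrow> lstate) \<Rightarrow> ghost set \<Rightarrow> obs set \<Rightarrow> bool" where
  "query_round_current L G Ob \<longleftrightarrow>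
     (\<forall>i \<rho> r t. QuerySent i \<rho> r t \<in> G \<longrightarrow> \<rho> \<le> rid (L i) \<and>
        (\<rho> = rid (L i) \<longrightarrow> querying Ob L i \<and> curop (L i) = Rd r \<and> rreg (L i) = r \<and>
           OEv (EInv i (opc (L i)) (Rd r) t) \<in> Ob))"

definition acks_recorded :: "(pid \<Rightarrow> lstate) \<Rightarrow> ghost set \<Rightarrow> obs set \<Rightarrow> bool" where
  "acks_recorded L G Ob \<longleftrightarrow>
     (\<forall>i. (\<not> updating Ob L i \<longrightarrow> acks (L i) = {}) \<and>
        (\<forall>j \<in> acks (L i). \<exists>a tsv. a < lt (L i) \<and> OUpd i (opc (L i)) tsv \<in> Ob \<and>
           Applied j a (op_reg (curop (L i))) tsv \<in> G))"

definition responses_recorded :: "(pid \<Rightarrow> lstate) \<Rightarrow> ghost set \<Rightarrow> obs set \<Rightarrow> bool" where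
  "responses_recorded L G Ob \<longleftrightarrow>
     (\<forall>i. (\<not> querying Ob L i \<longrightarrow> qresps (L i) = {}) \<and> inj_on snd (qresps (L i)) \<and>
        (\<forall>v j. (v, j) \<in> qresps (L i) \<longrightarrow> (\<exists>q t. Answered j q (rreg (L i)) v \<in> G \<and>
           curop (L i) = Rd (rreg (L i)) \<and>
           OEv (EInv i (opc (L i)) (Rd (rreg (L i))) t) \<in> Ob \<and> t < q)))"

definition tokens_at_most_one :: "network \<Rightarrow> (pid \<Rightarrow> lstate) \<Rightarrow> bool" where
  "tokens_at_most_one N L \<longleftrightarrow> (\<forall>i j \<rho>. tokens N L i j \<rho> \<le> 1)"

definition invocations_bounded :: "(pid \<Rightarrow> lstate) \<Rightarrow> obs set \<Rightarrow> bool" where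
  "invocations_bounded L Ob \<longleftrightarrow>
     (\<forall>i k op t. OEv (EInv i k op t) \<in> Ob \<longrightarrow>
        0 < k \<and> k \<le> opc (L i) \<and> (k = opc (L i) \<longrightarrow> op = curop (L i)))"

definition invocations_unique :: "obs set \<Rightarrow> bool" where
  "invocations_unique Ob \<longleftrightarrow>
     (\<forall>i k op t op' t'. OEv (EInv i k op t) \<in> Ob \<longrightarrow> OEv (EInv i k op' t') \<in> Ob \<longrightarrow> op = op' \<and> t = t')"

definition completions_bounded :: "(pid \<Rightarrow> lstate) \<Rightarrow> obs set \<Rightarrow> bool" where
  "completions_bounded L Ob \<longleftrightarrow>
     (\<forall>i k op res t. OEv (ERes i k op res t) \<in> Ob \<longrightarrow>
        k \<le> opc (L i) \<and> (k = opc (L i) \<longrightarrow> \<not> busy (L i)) \<and> (\<exists>tsv. OUpd i k tsv \<in> Ob))"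

definition update_records_bounded :: "(pid \<Rightarrow> lstate) \<Rightarrow> obs set \<Rightarrow> bool" where
  "update_records_bounded L Ob \<longleftrightarrow> (\<forall>i k tsv. OUpd i k tsv \<in> Ob \<longrightarrow> k \<le> opc (L i))"

definition update_records_unique :: "obs set \<Rightarrow> bool" where
  "update_records_unique Ob \<longleftrightarrow> (\<forall>i k tsv tsv'. OUpd i k tsv \<in> Ob \<longrightarrow> OUpd i k tsv' \<in> Ob \<longrightarrow> tsv = tsv')"

definition completion_quorum :: "nat \<Rightarrow> ghost set \<Rightarrow> obs set \<Rightarrow> bool" where
  "completion_quorum n G Ob \<longleftrightarrow>
     (\<forall>i k op res t tsv. OEv (ERes i k op res t) \<in> Ob \<longrightarrow> OUpd i k tsv \<in> Ob \<longrightarrow>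
        quorum n (\<lambda>j. \<exists>a < t. Applied j a (op_reg op) tsv \<in> G))"

definition read_quorum :: "nat \<Rightarrow> ghost set \<Rightarrow> obs set \<Rightarrow> bool" where
  "read_quorum n G Ob \<longleftrightarrow>
     (\<forall>i k r t tsv. OEv (EInv i k (Rd r) t) \<in> Ob \<longrightarrow> OUpd i k tsv \<in> Ob \<longrightarrow>
        quorum n (\<lambda>j. \<exists>q v. t < q \<and> Answered j q r v \<in> G \<and> v \<le> tsv))"

definition abd_inv :: "nat \<Rightarrow> network \<Rightarrow> (pid \<Rightarrow> lstate) \<Rightarrow> ghost set \<Rightarrow> obs set \<Rightarrow> bool" where
  "abd_inv n N L G Ob \<longleftrightarrow>
     messages_justified n N G \<and> applied_in_store n L G \<and> answered_in_past n L G \<and>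
     applied_before_answered G \<and> update_round_current L G Ob \<and> query_round_current L G Ob \<and>
     acks_recorded L G Ob \<and> responses_recorded L G Ob \<and> tokens_at_most_one N L \<and>
     invocations_bounded L Ob \<and> invocations_unique Ob \<and> completions_bounded L Ob \<and>
     update_records_bounded L Ob \<and> update_records_unique Ob \<and>
     completion_quorum n G Ob \<and> read_quorum n G Ob"

lemma abd_invD:
  assumes "abd_inv n N L G Ob"
  shows inv_messages_justified: "messages_justified n N G"
    and inv_applied_in_store: "applied_in_store n L G"
    and inv_answered_in_past: "answered_in_past n L G"
    and inv_applied_before_answered: "applied_before_answered G"
    and inv_update_round_current: "update_round_current L G Ob"
    and inv_query_round_current: "query_round_current L G Ob"
    and inv_acks_recorded: "acks_recorded L G Ob"
    and inv_responses_recorded: "responses_recorded L G Ob"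
    and inv_tokens: "tokens_at_most_one N L"
    and inv_invocations_bounded: "invocations_bounded L Ob"
    and inv_invocations_unique: "invocations_unique Ob"
    and inv_completions_bounded: "completions_bounded L Ob"
    and inv_update_records_bounded: "update_records_bounded L Ob"
    and inv_update_records_unique: "update_records_unique Ob"
    and inv_completion_quorum: "completion_quorum n G Ob"
    and inv_read_quorum: "read_quorum n G Ob"
  using assms unfolding abd_inv_def by simp_all

lemma abd_inv_init: "abd_inv n {#} (\<lambda>_. linit) {} {}"
  by (simp add: abd_inv_def linit_def tokens_def querying_def updating_def
      messages_justified_def applied_in_store_def answered_in_past_def
      applied_before_answered_def update_round_current_def query_round_current_def
      acks_recorded_def responses_recorded_def tokens_at_most_one_def invocations_bounded_def
      invocations_unique_def completions_bounded_def update_records_bounded_def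
      update_records_unique_def completion_quorum_def read_quorum_def)

lemma abd_inv_observed_ops:
  assumes "abd_inv n N L G Ob"
  shows "OEv (EInv i k op t) \<in> Ob \<Longrightarrow> k \<le> opc (L i)"
    and "OEv (ERes i k op res t) \<in> Ob \<Longrightarrow> k \<le> opc (L i)"
    and "OUpd i k tsv \<in> Ob \<Longrightarrow> k \<le> opc (L i)"
  using inv_invocations_bounded[OF assms] inv_completions_bounded[OF assms]
    inv_update_records_bounded[OF assms]
  unfolding invocations_bounded_def completions_bounded_def update_records_bounded_def by blast+

lemma abd_inv_sent_rounds:
  assumes "abd_inv n N L G Ob"
  shows "UpdateSent i \<rho> r tsv \<in> G \<Longrightarrow> \<rho> \<le> rid (L i)"
    and "QuerySent i \<rho> r t \<in> G \<Longrightarrow> \<rho> \<le> rid (L i)"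
  using inv_update_round_current[OF assms] inv_query_round_current[OF assms]
  unfolding update_round_current_def query_round_current_def by blast+

lemma abd_inv_idle:
  assumes I: "abd_inv n N L G Ob" and idle: "\<not> busy (L i)"
  shows "acks (L i) = {}" and "qresps (L i) = {}"
    and "UpdateSent i (rid (L i)) r tsv \<notin> G" and "QuerySent i (rid (L i)) r t \<notin> G"
  using idle inv_acks_recorded[OF I] inv_responses_recorded[OF I]
    inv_update_round_current[OF I] inv_query_round_current[OF I]
  unfolding acks_recorded_def responses_recorded_def update_round_current_def
    query_round_current_def updating_def querying_def
  by blast+

lemma abd_inv_no_tokens_beyond_round:
  assumes I: "abd_inv n N L G Ob" and "rid (L i) < \<rho>"
  shows "size (filter_mset (token_msg i j \<rho>) N) = 0"
proof -
  have "\<not> token_msg i j \<rho> y" if "y \<in># N" for y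
  proof -
    obtain a b m where y: "y = (a, b, m)"
      by (cases y) auto
    have "justified n G (a, b, m)"
      using inv_messages_justified[OF I] that y unfolding messages_justified_def by blast
    then show ?thesis
      using abd_inv_sent_rounds[OF I, of i] assms(2) y by (cases m) fastforce+
  qed
  then show ?thesis
    by (simp add: filter_mset_eq_conv)
qed

lemma mem_bcast: "(a, b, m) \<in># bcast n i m0 \<longleftrightarrow> a = i \<and> m = m0 \<and> b \<in> {1..n}"
  unfolding bcast_def by auto

lemma size_filter_bcast: "size (filter_mset P (bcast n i m)) = card {k \<in> {1..n}. P (i, k, m)}"
proof -
  have "size (filter_mset P (bcast n i m)) = length (filter (\<lambda>k. P (i, k, m)) [1..<n+1])"
    unfolding bcast_def
    by (simp only: flip: mset_filter add: size_mset filter_map length_map comp_def)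
  also have "\<dots> = card {k \<in> {1..n}. P (i, k, m)}"
    by (subst distinct_length_filter) (auto intro: arg_cong[where f = card])
  finally show ?thesis .
qed

lemma size_filter_remove:
  "y \<in># N \<Longrightarrow> size (filter_mset P (N - {#y#})) + (if P y then 1 else 0) = size (filter_mset P N)"
  by (induction N) (auto simp: insert_DiffM2[symmetric])

lemma size_filter_replace:
  "y \<in># N \<Longrightarrow> P x = P y \<Longrightarrow> size (filter_mset P (N - {#y#} + {#x#})) = size (filter_mset P N)"
  by (induction N) (auto simp: insert_DiffM2[symmetric])

lemma tokens_bcast_update: "tokens (N + bcast n i (Update t \<rho> r tsv)) L = tokens N L"
  unfolding tokens_def bcast_def by (auto intro!: ext)

lemma clock_store_mono:
  assumes "\<And>p. lt (L p) \<le> lt (L' p)" and "\<And>p r. tvps (L p) r \<le> tvps (L' p) r"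
  shows "applied_in_store n L G \<Longrightarrow> applied_in_store n L' G"
    and "answered_in_past n L G \<Longrightarrow> answered_in_past n L' G"
  unfolding applied_in_store_def answered_in_past_def using assms by (meson order_trans)+

definition advances :: "(pid \<Rightarrow> lstate) \<Rightarrow> (pid \<Rightarrow> lstate) \<Rightarrow> bool" where
  "advances L L' \<longleftrightarrow> (\<forall>p. rid (L' p) = rid (L p) \<and> busy (L' p) = busy (L p) \<and>
     opc (L' p) = opc (L p) \<and> curop (L' p) = curop (L p) \<and> rreg (L' p) = rreg (L p) \<and>
     acks (L' p) = acks (L p) \<and> qresps (L' p) = qresps (L p) \<and>
     lt (L p) \<le> lt (L' p) \<and> (\<forall>r. tvps (L p) r \<le> tvps (L' p) r))"

lemma abd_inv_advances:
  assumes I: "abd_inv n N L G Ob" and adv: "advances L L'"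
  shows "abd_inv n N L' G Ob"
proof -
  have same: "rid (L' p) = rid (L p)" "busy (L' p) = busy (L p)" "opc (L' p) = opc (L p)"
    "curop (L' p) = curop (L p)" "rreg (L' p) = rreg (L p)" "acks (L' p) = acks (L p)"
    "qresps (L' p) = qresps (L p)" for p
    using adv unfolding advances_def by auto
  have grow: "lt (L p) \<le> lt (L' p)" "tvps (L p) r \<le> tvps (L' p) r" for p r
    using adv unfolding advances_def by auto
  have phases: "querying Ob L' = querying Ob L" "updating Ob L' = updating Ob L"
    unfolding querying_def updating_def by (simp_all add: same)
  show ?thesis
    using I unfolding abd_inv_def
    unfolding applied_in_store_def answered_in_past_def update_round_current_def
      query_round_current_def acks_recorded_def responses_recorded_def tokens_at_most_one_def
      tokens_def invocations_bounded_def completions_bounded_def update_records_bounded_def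
    unfolding phases same
    by (meson grow order_trans order_less_le_trans)
qed

definition agree_except_round :: "(pid \<Rightarrow> lstate) \<Rightarrow> (pid \<Rightarrow> lstate) \<Rightarrow> bool" where
  "agree_except_round L L' \<longleftrightarrow> (\<forall>p. busy (L' p) = busy (L p) \<and> opc (L' p) = opc (L p) \<and>
     curop (L' p) = curop (L p) \<and> rreg (L' p) = rreg (L p) \<and> lt (L' p) = lt (L p) \<and>
     tvps (L' p) = tvps (L p))"

lemma agree_except_round_preserves:
  assumes "agree_except_round L L'"
  shows "querying Ob L' = querying Ob L" and "updating Ob L' = updating Ob L"
    and "applied_in_store n L' G = applied_in_store n L G"
    and "answered_in_past n L' G = answered_in_past n L G"
    and "invocations_bounded L' Ob = invocations_bounded L Ob"
    and "completions_bounded L' Ob = completions_bounded L Ob"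
    and "update_records_bounded L' Ob = update_records_bounded L Ob"
    and "\<forall>p. acks (L' p) = acks (L p) \<Longrightarrow> acks_recorded L' G Ob = acks_recorded L G Ob"
    and "\<forall>p. qresps (L' p) = qresps (L p) \<Longrightarrow> responses_recorded L' G Ob = responses_recorded L G Ob"
    and "\<forall>p. rid (L' p) = rid (L p) \<Longrightarrow> update_round_current L' G Ob = update_round_current L G Ob"
    and "\<forall>p. rid (L' p) = rid (L p) \<Longrightarrow> query_round_current L' G Ob = query_round_current L G Ob"
    and "\<forall>p. rid (L' p) = rid (L p) \<and> qresps (L' p) = qresps (L p) \<Longrightarrow> tokens N L' = tokens N L"
  using assms
  unfolding agree_except_round_def querying_def updating_def applied_in_store_def
    answered_in_past_def update_round_current_def query_round_current_def invocations_bounded_def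
    completions_bounded_def update_records_bounded_def acks_recorded_def responses_recorded_def
    tokens_def
  by simp_all

lemma justified_mono:
  assumes "justified n G x" and "G \<subseteq> G'"
  shows "justified n G' x"
proof -
  obtain a b m where "x = (a, b, m)"
    by (cases x) auto
  then show ?thesis
    using assms by (cases m) (simp only: justified.simps; blast)+
qed

lemma messages_justified_replace:
  assumes "messages_justified n N G" and "G \<subseteq> G'" and "justified n G' x"
  shows "messages_justified n (N - {#y#} + {#x#}) G'"
  unfolding messages_justified_def
proof
  fix z
  assume "z \<in># N - {#y#} + {#x#}"
  then consider "z \<in># N" | "z = x"
    by (auto dest: in_diffD)
  then show "justified n G' z"
    using assms justified_mono unfolding messages_justified_def by cases blast+
qed

lemma insert_ghost_preserves:
  shows "messages_justified n N G \<Longrightarrow> messages_justified n N (insert g G)"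
    and "acks_recorded L G Ob \<Longrightarrow> acks_recorded L (insert g G) Ob"
    and "responses_recorded L G Ob \<Longrightarrow> responses_recorded L (insert g G) Ob"
    and "completion_quorum n G Ob \<Longrightarrow> completion_quorum n (insert g G) Ob"
    and "read_quorum n G Ob \<Longrightarrow> read_quorum n (insert g G) Ob"
  unfolding messages_justified_def acks_recorded_def responses_recorded_def completion_quorum_def
    read_quorum_def
  by (blast intro: justified_mono quorum_mono)+

lemma insert_sent_preserves:
  assumes "\<And>p a r v. g \<noteq> Applied p a r v" and "\<And>p q r v. g \<noteq> Answered p q r v"
  shows "applied_in_store n L (insert g G) = applied_in_store n L G"
    and "answered_in_past n L (insert g G) = answered_in_past n L G"
    and "applied_before_answered (insert g G) = applied_before_answered G"
  using assms unfolding applied_in_store_def answered_in_past_def applied_before_answered_def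
  by blast+

lemma rounds_current_after_bump:
  assumes "update_round_current L G Ob" and "query_round_current L G Ob"
    and bump: "rid (L' i) = rid (L i) + 1" and others: "\<And>p. p \<noteq> i \<Longrightarrow> L' p = L p"
    and "Ob \<subseteq> Ob'" and "\<And>p. p \<noteq> i \<Longrightarrow> updating Ob' L p = updating Ob L p"
    and "\<And>p. p \<noteq> i \<Longrightarrow> querying Ob' L p = querying Ob L p"
  shows "update_round_current L' G Ob'" and "query_round_current L' G Ob'"
proof -
  have phases: "updating Ob' L' p = updating Ob L p" "querying Ob' L' p = querying Ob L p"
    if "p \<noteq> i" for p
    using that assms(6,7) others unfolding updating_def querying_def by auto
  show "update_round_current L' G Ob'"
    unfolding update_round_current_def
  proof (intro allI impI)
    fix p \<rho> r tsv
    assume "UpdateSent p \<rho> r tsv \<in> G"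
    note old = assms(1)[unfolded update_round_current_def, rule_format, OF this]
    show "\<rho> \<le> rid (L' p) \<and> (\<rho> = rid (L' p) \<longrightarrow>
        updating Ob' L' p \<and> r = op_reg (curop (L' p)) \<and> OUpd p (opc (L' p)) tsv \<in> Ob')"
      using old assms(5) bump others[of p] phases[of p] by (cases "p = i") auto
  qed
  show "query_round_current L' G Ob'"
    unfolding query_round_current_def
  proof (intro allI impI)
    fix p \<rho> r t
    assume "QuerySent p \<rho> r t \<in> G"
    note old = assms(2)[unfolded query_round_current_def, rule_format, OF this]
    show "\<rho> \<le> rid (L' p) \<and> (\<rho> = rid (L' p) \<longrightarrow> querying Ob' L' p \<and> curop (L' p) = Rd r \<and>
        rreg (L' p) = r \<and> OEv (EInv p (opc (L' p)) (Rd r) t) \<in> Ob')"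
      using old assms(5) bump others[of p] phases[of p] by (cases "p = i") auto
  qed
qed

lemma abd_inv_drop_msg:
  assumes "abd_inv n N L G Ob"
  shows "abd_inv n (N - {#y#}) L G Ob"
proof -
  have "tokens (N - {#y#}) L i j \<rho> \<le> tokens N L i j \<rho>" for i j \<rho>
    unfolding tokens_def by (simp add: size_mset_mono multiset_filter_mono)
  then show ?thesis
    using assms unfolding abd_inv_def messages_justified_def tokens_at_most_one_def
    by (meson in_diffD order_trans)
qed

section \<open>Elementary transitions\<close>

lemma abd_inv_answer_query:
  assumes I: "abd_inv n N L G Ob" and y: "(j, i, Query t \<rho> r) \<in># N" and "t < lt (L i)"
  defines "q \<equiv> lt (L i)" and "v \<equiv> tvps (L i) r"
  defines "N' \<equiv> N - {#(j, i, Query t \<rho> r)#} + {#(i, j, Response q \<rho> v)#}"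
    and "G' \<equiv> insert (Answered i q r v) G"
  shows "abd_inv n N' L G' Ob"
proof -
  have sent: "i \<in> {1..n}" "QuerySent j \<rho> r t \<in> G"
    using inv_messages_justified[OF I] y unfolding messages_justified_def by fastforce+
  have new: "justified n G' (i, j, Response q \<rho> v)"
    unfolding justified.simps G'_def q_def using sent \<open>t < lt (L i)\<close> by blast
  have "messages_justified n N' G'"
    unfolding N'_def
    by (rule messages_justified_replace[OF _ _ new]) (use I in \<open>auto simp: abd_inv_def G'_def\<close>)
  moreover have "answered_in_past n L G'"
    using inv_answered_in_past[OF I] sent unfolding answered_in_past_def G'_def q_def by blast
  moreover have "applied_before_answered G'"
    using inv_applied_before_answered[OF I] inv_applied_in_store[OF I]
    unfolding applied_before_answered_def applied_in_store_def G'_def v_def by blast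
  moreover have "tokens N' L i' j' \<rho>' = tokens N L i' j' \<rho>'" for i' j' \<rho>'
    unfolding tokens_def N'_def by (subst size_filter_replace[OF y]) auto
  ultimately show ?thesis
    using I unfolding abd_inv_def tokens_at_most_one_def
    unfolding applied_in_store_def update_round_current_def query_round_current_def G'_def
    by (simp add: insert_ghost_preserves)
qed

lemma abd_inv_apply_update:
  assumes I: "abd_inv n N L G Ob" and y: "(j, i, Update t \<rho> r tsv) \<in># N"
    and "tsv \<le> tvps (L i) r"
  defines "a \<equiv> lt (L i)"
  defines "N' \<equiv> N - {#(j, i, Update t \<rho> r tsv)#} + {#(i, j, Ack a \<rho>)#}"
    and "G' \<equiv> insert (Applied i a r tsv) G"
  shows "abd_inv n N' L G' Ob"
proof -
  have sent: "i \<in> {1..n}" "UpdateSent j \<rho> r tsv \<in> G"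
    using inv_messages_justified[OF I] y unfolding messages_justified_def by fastforce+
  have new: "justified n G' (i, j, Ack a \<rho>)"
    unfolding justified.simps G'_def using sent by blast
  have "messages_justified n N' G'"
    unfolding N'_def
    by (rule messages_justified_replace[OF _ _ new]) (use I in \<open>auto simp: abd_inv_def G'_def\<close>)
  moreover have "applied_in_store n L G'"
    using inv_applied_in_store[OF I] sent \<open>tsv \<le> tvps (L i) r\<close>
    unfolding applied_in_store_def G'_def a_def by auto
  moreover have "applied_before_answered G'"
    using inv_applied_before_answered[OF I] inv_answered_in_past[OF I]
    unfolding applied_before_answered_def answered_in_past_def G'_def a_def by (blast dest: leD)
  moreover have "tokens N' L i' j' \<rho>' = tokens N L i' j' \<rho>'" for i' j' \<rho>'
    unfolding tokens_def N'_def by (subst size_filter_replace[OF y]) auto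
  ultimately show ?thesis
    using I unfolding abd_inv_def tokens_at_most_one_def
    unfolding answered_in_past_def update_round_current_def query_round_current_def G'_def
    by (simp add: insert_ghost_preserves)
qed

lemma abd_inv_record_response:
  assumes I: "abd_inv n N L G Ob" and y: "(j, i, Response q \<rho> v) \<in># N" and \<rho>: "rid (L i) = \<rho>"
  defines "L' \<equiv> L(i := (L i)\<lparr>qresps := qresps (L i) \<union> {(v, j)}\<rparr>)"
  shows "abd_inv n (N - {#(j, i, Response q \<rho> v)#}) L' G Ob"
proof -
  obtain r t where answered: "Answered j q r v \<in> G" and sent: "QuerySent i \<rho> r t \<in> G" and "t < q"
    using inv_messages_justified[OF I] y unfolding messages_justified_def by fastforce
  then have phase: "querying Ob L i" "curop (L i) = Rd r" "rreg (L i) = r"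
    "OEv (EInv i (opc (L i)) (Rd r) t) \<in> Ob"
    using inv_query_round_current[OF I] \<rho> unfolding query_round_current_def by blast+
  have fresh: "j \<notin> snd ` qresps (L i)"
  proof
    assume "j \<in> snd ` qresps (L i)"
    moreover have "1 \<le> size (filter_mset (token_msg i j \<rho>) N)"
      using size_filter_remove[OF y, of "token_msg i j \<rho>"] by simp
    ultimately have "2 \<le> tokens N L i j \<rho>"
      unfolding tokens_def using \<rho> by simp
    moreover have "tokens N L i j \<rho> \<le> 1"
      using inv_tokens[OF I] unfolding tokens_at_most_one_def by blast
    ultimately show False
      by simp
  qed
  have core: "agree_except_round L L'"
    unfolding agree_except_round_def L'_def by simp
  have "responses_recorded L' G Ob"
    using inv_responses_recorded[OF I] phase fresh \<open>t < q\<close> answered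
    unfolding responses_recorded_def
    unfolding agree_except_round_preserves(1)[OF core]
    by (auto simp: L'_def inj_on_def image_iff; blast)
  moreover have "tokens (N - {#(j, i, Response q \<rho> v)#}) L' i' j' \<rho>' \<le> tokens N L i' j' \<rho>'"
    for i' j' \<rho>'
    using size_filter_remove[OF y, of "token_msg i' j' \<rho>'"] \<rho> unfolding tokens_def L'_def
    by auto
  then have "tokens_at_most_one (N - {#(j, i, Response q \<rho> v)#}) L'"
    using inv_tokens[OF I] unfolding tokens_at_most_one_def by (meson order_trans)
  moreover have "\<forall>p. acks (L' p) = acks (L p)" "\<forall>p. rid (L' p) = rid (L p)"
    by (simp_all add: L'_def)
  ultimately show ?thesis
    using abd_inv_drop_msg[OF I, of "(j, i, Response q \<rho> v)"]
    unfolding abd_inv_def agree_except_round_preserves(1-7)[OF core]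
    by (simp add: agree_except_round_preserves(8,10,11)[OF core])
qed

lemma abd_inv_record_ack:
  assumes I: "abd_inv n N L G Ob" and y: "(j, i, Ack t \<rho>) \<in># N" and \<rho>: "rid (L i) = \<rho>"
    and "t < lt (L i)"
  defines "L' \<equiv> L(i := (L i)\<lparr>acks := acks (L i) \<union> {j}\<rparr>)"
  shows "abd_inv n (N - {#(j, i, Ack t \<rho>)#}) L' G Ob"
proof -
  obtain r tsv where applied: "Applied j t r tsv \<in> G" and sent: "UpdateSent i \<rho> r tsv \<in> G"
    using inv_messages_justified[OF I] y unfolding messages_justified_def by fastforce
  then have phase: "updating Ob L i" "r = op_reg (curop (L i))" "OUpd i (opc (L i)) tsv \<in> Ob"
    using inv_update_round_current[OF I] \<rho> unfolding update_round_current_def by blast+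
  have core: "agree_except_round L L'"
    unfolding agree_except_round_def L'_def by simp
  have "acks_recorded L' G Ob"
    using inv_acks_recorded[OF I] phase applied \<open>t < lt (L i)\<close> unfolding acks_recorded_def
    unfolding agree_except_round_preserves(2)[OF core]
    by (auto simp: L'_def)
  moreover have "\<forall>p. qresps (L' p) = qresps (L p)" "\<forall>p. rid (L' p) = rid (L p)"
    by (simp_all add: L'_def)
  ultimately show ?thesis
    using abd_inv_drop_msg[OF I, of "(j, i, Ack t \<rho>)"]
    unfolding abd_inv_def tokens_at_most_one_def agree_except_round_preserves(1-7)[OF core]
    by (simp add: agree_except_round_preserves(9-12)[OF core])
qed

lemma abd_inv_invoke:
  fixes op :: opkind and b :: bool and x :: reg
  assumes I: "abd_inv n N L G Ob" and idle: "\<not> busy (L i)"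
  defines "t \<equiv> lt (L i) + 1" and "k \<equiv> opc (L i) + 1"
  defines "L' \<equiv>
    L(i := (L i)\<lparr>lt := t, reading := b, rreg := x, busy := True, opc := k, curop := op\<rparr>)"
  defines "Ob' \<equiv> insert (OEv (EInv i k op t)) Ob"
  shows "abd_inv n N L' G Ob'" and "querying Ob' L' i" and "qresps (L' i) = {}"
proof -
  have fresh: "OEv (EInv i k op' t') \<notin> Ob" "OEv (ERes i k op' res t') \<notin> Ob" "OUpd i k tsv \<notin> Ob"
    for op' t' res tsv
    using abd_inv_observed_ops[OF I, of i k] unfolding k_def by (metis Suc_eq_plus1 Suc_n_not_le_n)+
  have phases: "querying Ob' L' p = (p = i \<or> querying Ob L p)"
    "updating Ob' L' p = (p \<noteq> i \<and> updating Ob L p)" for p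
    using idle fresh(3) unfolding querying_def updating_def L'_def Ob'_def by auto
  note idle_sets = abd_inv_idle(1,2)[OF I idle] and silent = abd_inv_idle(3,4)[OF I idle]
  have "lt (L p) \<le> lt (L' p)" "tvps (L p) r \<le> tvps (L' p) r" for p r
    by (simp_all add: L'_def t_def)
  then have "applied_in_store n L' G" "answered_in_past n L' G"
    using clock_store_mono inv_applied_in_store[OF I] inv_answered_in_past[OF I] by blast+
  moreover have "update_round_current L' G Ob'" "query_round_current L' G Ob'"
    using inv_update_round_current[OF I] inv_query_round_current[OF I] silent
    unfolding update_round_current_def query_round_current_def phases
    by (auto simp: L'_def Ob'_def)
  moreover have "acks_recorded L' G Ob'" "responses_recorded L' G Ob'"
    using inv_acks_recorded[OF I] inv_responses_recorded[OF I] idle_sets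
    unfolding acks_recorded_def responses_recorded_def phases by (auto simp: L'_def Ob'_def)
  moreover have "tokens N L' = tokens N L"
    using idle_sets unfolding tokens_def L'_def by (auto intro!: ext)
  moreover have "invocations_bounded L' Ob'"
    using inv_invocations_bounded[OF I] unfolding invocations_bounded_def
    by (fastforce simp: L'_def Ob'_def k_def)
  moreover have "invocations_unique Ob'"
    using inv_invocations_unique[OF I] fresh(1) unfolding invocations_unique_def Ob'_def by blast
  moreover have "completions_bounded L' Ob'"
    using inv_completions_bounded[OF I] abd_inv_observed_ops(2)[OF I] fresh(2)
    unfolding completions_bounded_def by (auto simp: L'_def Ob'_def k_def le_SucI)
  moreover have "update_records_bounded L' Ob'"
    using abd_inv_observed_ops(3)[OF I]
    unfolding update_records_bounded_def by (auto simp: L'_def Ob'_def k_def le_SucI)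
  moreover have "read_quorum n G Ob'"
    using inv_read_quorum[OF I] fresh(3) unfolding read_quorum_def Ob'_def by blast
  ultimately show "abd_inv n N L' G Ob'"
    using abd_invD[OF I] unfolding abd_inv_def tokens_at_most_one_def update_records_unique_def
      completion_quorum_def Ob'_def by simp
  show "querying Ob' L' i" "qresps (L' i) = {}"
    using phases idle_sets by (simp_all add: L'_def)
qed

lemma abd_inv_send_queries:
  assumes I: "abd_inv n N L G Ob" and phase: "querying Ob L i" and "qresps (L i) = {}"
    and op: "curop (L i) = Rd r" "rreg (L i) = r" and inv: "OEv (EInv i (opc (L i)) (Rd r) t) \<in> Ob"
  defines "\<rho> \<equiv> rid (L i) + 1"
  defines "L' \<equiv> L(i := (L i)\<lparr>rid := \<rho>\<rparr>)"
    and "N' \<equiv> N + bcast n i (Query t \<rho> r)" and "G' \<equiv> insert (QuerySent i \<rho> r t) G"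
  shows "abd_inv n N' L' G' Ob"
proof -
  have core: "querying Ob L' = querying Ob L" "updating Ob L' = updating Ob L"
    unfolding querying_def updating_def L'_def by auto
  have no_tokens: "size (filter_mset (token_msg i j \<rho>) N) = 0" for j
    using abd_inv_no_tokens_beyond_round[OF I] unfolding \<rho>_def by simp
  have "messages_justified n N' G'"
    using inv_messages_justified[OF I] unfolding messages_justified_def N'_def G'_def
    by (auto simp: mem_bcast intro: justified_mono)
  moreover have "update_round_current L' G Ob" "query_round_current L' G Ob"
    using inv_update_round_current[OF I] inv_query_round_current[OF I]
    by (rule rounds_current_after_bump[where i = i]; simp add: L'_def \<rho>_def)+
  then have "update_round_current L' G' Ob" "query_round_current L' G' Ob"
    using phase op inv unfolding update_round_current_def query_round_current_def G'_def core
    by (auto simp: L'_def \<rho>_def)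
  moreover have "acks_recorded L' G' Ob" "responses_recorded L' G' Ob"
    using insert_ghost_preserves(2,3) inv_acks_recorded[OF I] inv_responses_recorded[OF I]
    unfolding G'_def acks_recorded_def responses_recorded_def core by (auto simp: L'_def)
  moreover have "tokens N' L' i' j' \<rho>' \<le> 1" for i' j' \<rho>'
  proof (cases "i' = i \<and> \<rho>' = \<rho>")
    case True
    then have "size (filter_mset (token_msg i' j' \<rho>') (bcast n i (Query t \<rho> r))) \<le> 1"
      unfolding size_filter_bcast by (auto simp: card_le_Suc0_iff_eq)
    moreover have "size (filter_mset (token_msg i' j' \<rho>') N) = 0"
      using True no_tokens by simp
    moreover have "tokens N' L' i' j' \<rho>' = size (filter_mset (token_msg i' j' \<rho>') N)
        + size (filter_mset (token_msg i' j' \<rho>') (bcast n i (Query t \<rho> r)))"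
      using True \<open>qresps (L i) = {}\<close> unfolding tokens_def N'_def by (simp add: L'_def)
    ultimately show ?thesis
      by linarith
  next
    case False
    then have "size (filter_mset (token_msg i' j' \<rho>') (bcast n i (Query t \<rho> r))) = 0"
      unfolding size_filter_bcast by auto
    moreover have "tokens N' L' i' j' \<rho>' =
        tokens N L i' j' \<rho>' + size (filter_mset (token_msg i' j' \<rho>') (bcast n i (Query t \<rho> r)))"
      using \<open>qresps (L i) = {}\<close> unfolding tokens_def N'_def by (simp add: L'_def)
    ultimately show ?thesis
      using inv_tokens[OF I] unfolding tokens_at_most_one_def by (metis add.right_neutral)
  qed
  moreover have "agree_except_round L L'"
    unfolding agree_except_round_def L'_def by simp
  ultimately show ?thesis
    using abd_invD[OF I] insert_ghost_preserves(4,5)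
    unfolding abd_inv_def tokens_at_most_one_def G'_def
    by (simp add: agree_except_round_preserves(3-7) insert_sent_preserves)
qed

lemma abd_inv_start_update_phase:
  fixes x :: int
  assumes I: "abd_inv n N L G Ob" and phase: "querying Ob L i"
    and quorum: "\<And>r t. OEv (EInv i (opc (L i)) (Rd r) t) \<in> Ob \<Longrightarrow>
      quorum n (\<lambda>j. \<exists>q v. t < q \<and> Answered j q r v \<in> G \<and> v \<le> tsv)"
  defines "\<rho> \<equiv> rid (L i) + 1" and "r \<equiv> op_reg (curop (L i))"
  defines "L' \<equiv> L(i := (L i)\<lparr>qresps := {}, rval := x, rid := \<rho>\<rparr>)"
    and "N' \<equiv> N + bcast n i (Update (lt (L i)) \<rho> r tsv)"
    and "G' \<equiv> insert (UpdateSent i \<rho> r tsv) G"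
    and "Ob' \<equiv> insert (OUpd i (opc (L i)) tsv) Ob"
  shows "abd_inv n N' L' G' Ob'"
proof -
  have busy: "busy (L i)" and fresh: "OUpd i (opc (L i)) tsv' \<notin> Ob" for tsv'
    using phase unfolding querying_def by auto
  have no_acks: "acks (L i) = {}"
    using phase inv_acks_recorded[OF I]
    unfolding acks_recorded_def querying_def updating_def by blast
  have no_completion: "OEv (ERes i (opc (L i)) op res t) \<notin> Ob" for op res t
    using busy inv_completions_bounded[OF I] unfolding completions_bounded_def by blast
  have phases: "updating Ob' L' p = (p = i \<or> updating Ob L p)"
    "querying Ob' L' p = (p \<noteq> i \<and> querying Ob L p)" for p
    using phase unfolding updating_def querying_def L'_def Ob'_def by auto
  have core: "agree_except_round L L'"
    unfolding agree_except_round_def L'_def by simp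
  have "messages_justified n N' G'"
    using inv_messages_justified[OF I] unfolding messages_justified_def N'_def G'_def
    by (auto simp: mem_bcast intro: justified_mono)
  moreover have "update_round_current L' G Ob'" "query_round_current L' G Ob'"
    using inv_update_round_current[OF I] inv_query_round_current[OF I]
    by (rule rounds_current_after_bump[where i = i];
        auto simp: L'_def \<rho>_def Ob'_def updating_def querying_def)+
  then have "update_round_current L' G' Ob'" "query_round_current L' G' Ob'"
    using busy unfolding update_round_current_def query_round_current_def G'_def
    by (auto simp: L'_def \<rho>_def Ob'_def r_def updating_def)
  moreover have "acks_recorded L' G' Ob'" "responses_recorded L' G' Ob'"
    using inv_acks_recorded[OF I] inv_responses_recorded[OF I] no_acks
    unfolding acks_recorded_def responses_recorded_def phases
    by (auto simp: L'_def G'_def Ob'_def)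
  moreover have "tokens N' L' i' j' \<rho>' \<le> tokens N L i' j' \<rho>'" for i' j' \<rho>'
    unfolding N'_def tokens_bcast_update unfolding tokens_def by (simp add: L'_def)
  moreover have "completions_bounded L' Ob'" "update_records_bounded L' Ob'"
    using inv_completions_bounded[OF I] inv_update_records_bounded[OF I]
    unfolding completions_bounded_def update_records_bounded_def
    by (auto simp: L'_def Ob'_def; blast)+
  moreover have "invocations_bounded L' Ob'" "invocations_unique Ob'"
    using inv_invocations_bounded[OF I] inv_invocations_unique[OF I]
    unfolding agree_except_round_preserves(5)[OF core]
    unfolding invocations_bounded_def invocations_unique_def Ob'_def by simp_all
  moreover have "update_records_unique Ob'"
    using inv_update_records_unique[OF I] fresh unfolding update_records_unique_def Ob'_def by blast
  moreover have "completion_quorum n G' Ob'"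
    using insert_ghost_preserves(4)[OF inv_completion_quorum[OF I]] no_completion
    unfolding completion_quorum_def G'_def Ob'_def by blast
  moreover have "read_quorum n G' Ob'"
    using insert_ghost_preserves(5)[OF inv_read_quorum[OF I]] quorum
    unfolding read_quorum_def G'_def Ob'_def by (blast intro: quorum_mono)
  ultimately show ?thesis
    using abd_invD[OF I] unfolding abd_inv_def tokens_at_most_one_def G'_def
    by (simp add: agree_except_round_preserves(3,4)[OF core] insert_sent_preserves)
      (meson order_trans)
qed

lemma responses_form_quorum:
  assumes I: "abd_inv n N L G Ob" and full: "card (qresps (L i)) = maj n"
    and inv: "OEv (EInv i (opc (L i)) (Rd r) t) \<in> Ob"
  shows "quorum n (\<lambda>j. \<exists>q v. t < q \<and> Answered j q r v \<in> G \<and> v \<le> Max (fst ` qresps (L i)))"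
proof -
  have fin: "finite (qresps (L i))"
    using full unfolding maj_def by (metis card.infinite zero_neq_one add_is_0)
  have recorded: "\<exists>q t'. Answered j q (rreg (L i)) v \<in> G \<and> curop (L i) = Rd (rreg (L i)) \<and>
      OEv (EInv i (opc (L i)) (Rd (rreg (L i))) t') \<in> Ob \<and> t' < q"
    if "(v, j) \<in> qresps (L i)" for v j
    using that inv_responses_recorded[OF I] unfolding responses_recorded_def by blast
  have "snd ` qresps (L i) \<subseteq> {1..n}"
  proof
    fix j
    assume "j \<in> snd ` qresps (L i)"
    then obtain v where "(v, j) \<in> qresps (L i)"
      by force
    then show "j \<in> {1..n}"
      using recorded inv_answered_in_past[OF I] unfolding answered_in_past_def by blast
  qed
  moreover have "card (snd ` qresps (L i)) = maj n"
    using inv_responses_recorded[OF I] full unfolding responses_recorded_def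
    by (simp add: card_image)
  moreover have "\<exists>q v. t < q \<and> Answered j q r v \<in> G \<and> v \<le> Max (fst ` qresps (L i))"
    if member: "j \<in> snd ` qresps (L i)" for j
  proof -
    obtain v where v: "(v, j) \<in> qresps (L i)"
      using member by force
    then obtain q t' where answered: "Answered j q (rreg (L i)) v \<in> G" and "t' < q"
      and "OEv (EInv i (opc (L i)) (Rd (rreg (L i))) t') \<in> Ob"
      using recorded by blast
    then have "rreg (L i) = r" "t' = t"
      using inv inv_invocations_unique[OF I] unfolding invocations_unique_def by blast+
    moreover have "v \<le> Max (fst ` qresps (L i))"
      using fin v by (simp add: rev_image_eqI)
    ultimately show ?thesis
      using answered \<open>t' < q\<close> by blast
  qed
  ultimately show ?thesis
    unfolding quorum_def by (intro exI[of _ "snd ` qresps (L i)"]) blast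
qed

lemma abd_inv_close_query_phase:
  assumes I: "abd_inv n N L G Ob" and full: "card (qresps (L i)) = maj n"
  defines "M \<equiv> Max (fst ` qresps (L i))"
  shows "abd_inv n (N + bcast n i (Update (lt (L i)) (rid (L i) + 1) (rreg (L i)) M))
    (L(i := (L i)\<lparr>qresps := {}, rval := snd M, rid := rid (L i) + 1\<rparr>))
    (insert (UpdateSent i (rid (L i) + 1) (rreg (L i)) M) G) (insert (OUpd i (opc (L i)) M) Ob)"
proof -
  obtain v j where "(v, j) \<in> qresps (L i)"
    using full unfolding maj_def by (metis card.empty ex_in_conv surj_pair zero_neq_one add_is_0)
  then have phase: "querying Ob L i" and reading: "curop (L i) = Rd (rreg (L i))"
    using inv_responses_recorded[OF I] unfolding responses_recorded_def by blast+
  show ?thesis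
    using abd_inv_start_update_phase[OF I phase responses_form_quorum[OF I full], where x = "snd M"]
    by (simp add: reading M_def)
qed

lemma acks_form_quorum:
  assumes I: "abd_inv n N L G Ob" and full: "card (acks (L i)) = maj n"
    and upd: "OUpd i (opc (L i)) tsv \<in> Ob"
  shows "quorum n (\<lambda>j. \<exists>a < lt (L i). Applied j a (op_reg (curop (L i))) tsv \<in> G)"
proof -
  have acked: "\<exists>a < lt (L i). Applied j a (op_reg (curop (L i))) tsv \<in> G"
    if "j \<in> acks (L i)" for j
    using that upd inv_acks_recorded[OF I] inv_update_records_unique[OF I]
    unfolding acks_recorded_def update_records_unique_def by blast
  then have "acks (L i) \<subseteq> {1..n}"
    using inv_applied_in_store[OF I] unfolding applied_in_store_def by blast
  then show ?thesis
    unfolding quorum_def using full acked by blast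
qed

lemma abd_inv_complete:
  fixes res :: result
  assumes I: "abd_inv n N L G Ob" and full: "card (acks (L i)) = maj n"
  defines "L' \<equiv> L(i := (L i)\<lparr>acks := {}, rid := rid (L i) + 1, busy := False\<rparr>)"
    and "Ob' \<equiv> insert (OEv (ERes i (opc (L i)) (curop (L i)) res (lt (L i)))) Ob"
  shows "abd_inv n N L' G Ob'"
proof -
  obtain j where "j \<in> acks (L i)"
    using full unfolding maj_def by (metis card.empty ex_in_conv zero_neq_one add_is_0)
  then obtain tsv where phase: "updating Ob L i" and upd: "OUpd i (opc (L i)) tsv \<in> Ob"
    using inv_acks_recorded[OF I] unfolding acks_recorded_def by blast
  have no_responses: "qresps (L i) = {}"
    using phase inv_responses_recorded[OF I]
    unfolding responses_recorded_def querying_def updating_def by blast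
  have phases: "updating Ob' L' p = (p \<noteq> i \<and> updating Ob L p)"
    "querying Ob' L' p = (p \<noteq> i \<and> querying Ob L p)" for p
    unfolding updating_def querying_def L'_def Ob'_def by auto
  have "lt (L p) \<le> lt (L' p)" "tvps (L p) r \<le> tvps (L' p) r" for p r
    by (simp_all add: L'_def)
  then have "applied_in_store n L' G" "answered_in_past n L' G"
    using clock_store_mono inv_applied_in_store[OF I] inv_answered_in_past[OF I] by blast+
  moreover have "update_round_current L' G Ob'" "query_round_current L' G Ob'"
    using inv_update_round_current[OF I] inv_query_round_current[OF I]
    by (rule rounds_current_after_bump[where i = i];
        auto simp: L'_def Ob'_def updating_def querying_def)+
  moreover have "acks_recorded L' G Ob'" "responses_recorded L' G Ob'"
    using inv_acks_recorded[OF I] inv_responses_recorded[OF I] no_responses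
    unfolding acks_recorded_def responses_recorded_def phases by (auto simp: L'_def Ob'_def)
  moreover have "tokens N L' = tokens N L"
    using no_responses unfolding tokens_def L'_def by (auto intro!: ext)
  moreover have "completions_bounded L' Ob'"
    using inv_completions_bounded[OF I] upd unfolding completions_bounded_def
    by (auto simp: L'_def Ob'_def; blast)
  moreover have "completion_quorum n G Ob'"
    using inv_update_records_unique[OF I] inv_completion_quorum[OF I] upd
      acks_form_quorum[OF I full upd]
    unfolding completion_quorum_def update_records_unique_def Ob'_def by blast
  moreover have "invocations_bounded L' Ob'" "update_records_bounded L' Ob'"
    using inv_invocations_bounded[OF I] inv_update_records_bounded[OF I]
    unfolding invocations_bounded_def update_records_bounded_def by (simp_all add: L'_def Ob'_def)
  ultimately show ?thesis
    using abd_invD[OF I]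
    unfolding abd_inv_def tokens_at_most_one_def invocations_unique_def update_records_unique_def
      read_quorum_def Ob'_def by simp
qed

section \<open>Steps of the system preserve the invariant\<close>

lemma abd_inv_invocation:
  assumes I: "abd_inv n N L G Ob" and idle: "\<not> busy (L i)"
    and inv: "invoke n i op (L i) = (l', ms, os)"
  shows "\<exists>G'. abd_inv n (N + ms) (L(i := l')) G' (Ob \<union> set os)"
proof (cases op)
  case (Rd r)
  note invoked = abd_inv_invoke[OF I idle, where op = "Rd r" and b = True and x = r]
  have "l' = (L i)\<lparr>lt := lt (L i) + 1, reading := True, rreg := r, busy := True,
      opc := opc (L i) + 1, curop := Rd r, rid := rid (L i) + 1\<rparr>"
    and "ms = bcast n i (Query (lt (L i) + 1) (rid (L i) + 1) r)"
    and "os = [OEv (EInv i (opc (L i) + 1) (Rd r) (lt (L i) + 1))]"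
    using inv Rd by (auto simp: Let_def)
  then show ?thesis
    using abd_inv_send_queries[OF invoked, where r = r and t = "lt (L i) + 1"]
    by (auto simp: fun_upd_same fun_upd_upd simp del: fun_upd_apply)
next
  case (Wr r v)
  let ?t = "lt (L i) + 1" and ?k = "opc (L i) + 1"
  note invoked = abd_inv_invoke[OF I idle, where op = "Wr r v" and b = False and x = "rreg (L i)"]
  have no_read: "OEv (EInv i ?k (Rd r') t') \<notin> insert (OEv (EInv i ?k (Wr r v) ?t)) Ob" for r' t'
    using inv_invocations_bounded[OF invoked(1)] unfolding invocations_bounded_def by fastforce
  have "qresps (L i) = {}"
    using invoked(3) by simp
  then have "l' = (L i)\<lparr>lt := ?t, reading := False, rreg := rreg (L i), busy := True, opc := ?k,
      curop := Wr r v, qresps := {}, rval := rval (L i), rid := rid (L i) + 1\<rparr>"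
    and "ms = bcast n i (Update ?t (rid (L i) + 1) r ((?t, i), v))"
    and "os = [OEv (EInv i ?k (Wr r v) ?t), OUpd i ?k ((?t, i), v)]"
    using inv Wr by (auto simp: Let_def)
  then show ?thesis
    using abd_inv_start_update_phase[OF invoked(1,2), where tsv = "((?t, i), v)"
        and x = "rval (L i)"] no_read
    by (auto simp: fun_upd_same fun_upd_upd insert_commute simp del: fun_upd_apply)
qed

lemma abd_inv_deliver_query:
  assumes I: "abd_inv n N L G Ob" and y: "(j, i, Query t \<rho> r) \<in># N"
    and h: "handle n j i (Query t \<rho> r) (L i) = (l', ms, os)"
  shows "\<exists>G'. abd_inv n (N - {#(j, i, Query t \<rho> r)#} + ms) (L(i := l')) G' (Ob \<union> set os)"
proof -
  let ?L = "L(i := (L i)\<lparr>lt := max (lt (L i)) t + 1\<rparr>)"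
  have advanced: "abd_inv n N ?L G Ob"
    by (rule abd_inv_advances[OF I]) (simp add: advances_def)
  have "t < lt (?L i)"
    by (simp add: less_Suc_eq_le)
  then show ?thesis
    using abd_inv_answer_query[OF advanced y] h by (auto simp: Let_def)
qed

lemma abd_inv_deliver_update:
  assumes I: "abd_inv n N L G Ob" and y: "(j, i, Update t \<rho> r tsv) \<in># N"
    and h: "handle n j i (Update t \<rho> r tsv) (L i) = (l', ms, os)"
  shows "\<exists>G'. abd_inv n (N - {#(j, i, Update t \<rho> r tsv)#} + ms) (L(i := l')) G' (Ob \<union> set os)"
proof -
  let ?L = "L(i := (L i)\<lparr>lt := max (lt (L i)) t + 1,
    tvps := (tvps (L i))(r := max (tvps (L i) r) tsv)\<rparr>)"
  have advanced: "abd_inv n N ?L G Ob"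
    by (rule abd_inv_advances[OF I]) (simp add: advances_def)
  have "tsv \<le> tvps (?L i) r"
    by simp
  then show ?thesis
    using abd_inv_apply_update[OF advanced y] h by (auto simp: Let_def)
qed

lemma abd_inv_deliver_response:
  assumes I: "abd_inv n N L G Ob" and y: "(j, i, Response q \<rho> v) \<in># N"
    and h: "handle n j i (Response q \<rho> v) (L i) = (l', ms, os)"
  shows "\<exists>G'. abd_inv n (N - {#(j, i, Response q \<rho> v)#} + ms) (L(i := l')) G' (Ob \<union> set os)"
proof (cases "rid (L i) = \<rho>")
  case False
  then show ?thesis
    using abd_inv_drop_msg[OF I] h by (auto intro!: exI[of _ G])
next
  case True
  let ?l = "(L i)\<lparr>lt := max (lt (L i)) q + 1, qresps := qresps (L i) \<union> {(v, j)}\<rparr>"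
  have "abd_inv n N (L(i := (L i)\<lparr>lt := max (lt (L i)) q + 1\<rparr>)) G Ob"
    by (rule abd_inv_advances[OF I]) (simp add: advances_def)
  from abd_inv_record_response[OF this y] True
  have recorded: "abd_inv n (N - {#(j, i, Response q \<rho> v)#}) (L(i := ?l)) G Ob"
    by simp
  show ?thesis
  proof (cases "card (qresps (L i) \<union> {(v, j)}) = maj n")
    case False
    then show ?thesis
      using recorded True h by (auto simp: Let_def)
  next
    case full: True
    show ?thesis
      using abd_inv_close_query_phase[OF recorded, of i] full True h
      by (auto simp: Let_def fun_upd_same fun_upd_upd simp del: fun_upd_apply)
  qed
qed

lemma abd_inv_deliver_ack:
  assumes I: "abd_inv n N L G Ob" and y: "(j, i, Ack t \<rho>) \<in># N"
    and h: "handle n j i (Ack t \<rho>) (L i) = (l', ms, os)"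
  shows "\<exists>G'. abd_inv n (N - {#(j, i, Ack t \<rho>)#} + ms) (L(i := l')) G' (Ob \<union> set os)"
proof (cases "rid (L i) = \<rho>")
  case False
  then show ?thesis
    using abd_inv_drop_msg[OF I] h by (auto intro!: exI[of _ G])
next
  case True
  let ?l = "(L i)\<lparr>lt := max (lt (L i)) t + 1, acks := acks (L i) \<union> {j}\<rparr>"
  have advanced: "abd_inv n N (L(i := (L i)\<lparr>lt := max (lt (L i)) t + 1\<rparr>)) G Ob"
    by (rule abd_inv_advances[OF I]) (simp add: advances_def)
  have "t < max (lt (L i)) t + 1"
    by (simp add: less_Suc_eq_le)
  with abd_inv_record_ack[OF advanced y] True
  have recorded: "abd_inv n (N - {#(j, i, Ack t \<rho>)#}) (L(i := ?l)) G Ob"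
    by simp
  show ?thesis
  proof (cases "card (acks (L i) \<union> {j}) = maj n")
    case False
    then show ?thesis
      using recorded True h by (auto simp: Let_def intro!: exI[of _ G])
  next
    case full: True
    show ?thesis
      using abd_inv_complete[OF recorded, of i] full True h
      by (auto simp: Let_def fun_upd_same fun_upd_upd simp del: fun_upd_apply intro!: exI[of _ G])
  qed
qed

lemma abd_inv_step:
  assumes I: "abd_inv n (net s) (locals s) G Ob" and step: "step n f s x = Some (s', os)"
  shows "\<exists>G'. abd_inv n (net s') (locals s') G' (Ob \<union> set os)"
proof (cases x)
  case (Invoke i op)
  then obtain l' ms where "invoke n i op (locals s i) = (l', ms, os)" and "\<not> busy (locals s i)"
    and "s' = s\<lparr>locals := (locals s)(i := l'), net := net s + ms\<rparr>"
    using step by (auto split: if_splits prod.splits)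
  then show ?thesis
    using abd_inv_invocation[OF I] by simp
next
  case (Deliver j i m)
  then obtain l' ms where h: "handle n j i m (locals s i) = (l', ms, os)"
    and y: "(j, i, m) \<in># net s"
    and s': "s' = s\<lparr>locals := (locals s)(i := l'), net := net s - {#(j, i, m)#} + ms\<rparr>"
    using step by (auto split: if_splits prod.splits)
  have "\<exists>G'. abd_inv n (net s - {#(j, i, m)#} + ms) ((locals s)(i := l')) G' (Ob \<union> set os)"
  proof (cases m)
    case (Query t \<rho> r)
    show ?thesis
      using abd_inv_deliver_query[OF I y[unfolded Query] h[unfolded Query]] unfolding Query .
  next
    case (Update t \<rho> r tsv)
    show ?thesis
      using abd_inv_deliver_update[OF I y[unfolded Update] h[unfolded Update]] unfolding Update .
  next
    case (Response q \<rho> v)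
    show ?thesis
      using abd_inv_deliver_response[OF I y[unfolded Response] h[unfolded Response]]
      unfolding Response .
  next
    case (Ack t \<rho>)
    show ?thesis
      using abd_inv_deliver_ack[OF I y[unfolded Ack] h[unfolded Ack]] unfolding Ack .
  qed
  then show ?thesis
    using s' by simp
next
  case (Crash i)
  then show ?thesis
    using I step by (auto split: if_splits)
qed

lemma abd_inv_execs:
  assumes "abd_inv n (net s) (locals s) G Ob" and "execs n f s inps = Some (s', os)"
  shows "\<exists>G'. abd_inv n (net s') (locals s') G' (Ob \<union> set os)"
  using assms
proof (induction inps arbitrary: s G Ob os)
  case Nil
  then show ?case by auto
next
  case (Cons x inps)
  obtain s1 os1 os2 where step: "step n f s x = Some (s1, os1)"
    and rest: "execs n f s1 inps = Some (s', os2)" and os: "os = os1 @ os2"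
    using Cons.prems(2) by (auto split: option.splits)
  obtain G1 where "abd_inv n (net s1) (locals s1) G1 (Ob \<union> set os1)"
    using abd_inv_step[OF Cons.prems(1) step] by blast
  from Cons.IH[OF this rest] show ?case
    unfolding os by (simp add: Un_assoc)
qed

lemma abd_inv_reachable:
  assumes "execs n f ginit inps = Some (s, os)"
  shows "\<exists>G. abd_inv n (net s) (locals s) G (set os)"
  using abd_inv_execs[of n ginit "{}" "{}"] abd_inv_init assms by (simp add: ginit_def)

section \<open>Completed updates are visible to later reads\<close>

lemma update_visible_to_later_read:
  assumes I: "abd_inv n N L G Ob"
    and res: "OEv (ERes i k op res t) \<in> Ob" "OUpd i k tsv \<in> Ob"
    and read: "OEv (EInv i' k' (Rd (op_reg op)) t') \<in> Ob" "OUpd i' k' tsv' \<in> Ob"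
    and "t \<le> t'"
  shows "tsv \<le> tsv'"
proof -
  have "quorum n (\<lambda>j. \<exists>a < t. Applied j a (op_reg op) tsv \<in> G)"
    using inv_completion_quorum[OF I] res unfolding completion_quorum_def by blast
  moreover have "quorum n (\<lambda>j. \<exists>q v. t' < q \<and> Answered j q (op_reg op) v \<in> G \<and> v \<le> tsv')"
    using inv_read_quorum[OF I] read unfolding read_quorum_def by blast
  ultimately obtain j where "\<exists>a < t. Applied j a (op_reg op) tsv \<in> G"
    and "\<exists>q v. t' < q \<and> Answered j q (op_reg op) v \<in> G \<and> v \<le> tsv'"
    by (rule quorums_intersect)
  then obtain a q v where "a < t" "Applied j a (op_reg op) tsv \<in> G"
    and "t' < q" "Answered j q (op_reg op) v \<in> G" "v \<le> tsv'"
    by blast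
  moreover have "a < q"
    using \<open>a < t\<close> \<open>t \<le> t'\<close> \<open>t' < q\<close> by linarith
  ultimately show ?thesis
    using inv_applied_before_answered[OF I] unfolding applied_before_answered_def
    by (blast intro: order_trans)
qed

lemma hist_mem: "e \<in> set (hist os) \<longleftrightarrow> OEv e \<in> set os"
  unfolding hist_def by (induction os) (auto split: obs.splits)

lemma prec_restr_Hlt:
  assumes "prec (restr x (Hlt H)) (p1, k1) (p2, k2)"
  obtains op1 res t1 op2 t2 where "ERes p1 k1 op1 res t1 \<in> set H" "op_reg op1 = x"
    and "EInv p2 k2 op2 t2 \<in> set H" "op_reg op2 = x" and "t1 \<le> t2"
proof -
  let ?G = "restr x (Hlt H)"
  obtain a b where ab: "a < b" "b < length ?G"
    "is_res_of (?G ! a) (p1, k1)" "is_inv_of (?G ! b) (p2, k2)"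
    using assms unfolding prec_def by blast
  obtain op1 res t1 where e1: "?G ! a = ERes p1 k1 op1 res t1"
    using ab(3) by (cases "?G ! a") auto
  obtain op2 t2 where e2: "?G ! b = EInv p2 k2 op2 t2"
    using ab(4) by (cases "?G ! b") auto
  have "sorted (map (\<lambda>e. (ev_lt e, ev_proc e)) ?G)"
    unfolding restr_def Hlt_def by (rule sorted_filter) simp
  then have "(ev_lt (?G ! a), ev_proc (?G ! a)) \<le> (ev_lt (?G ! b), ev_proc (?G ! b))"
    using sorted_nth_mono[of _ a b] ab(1,2) by fastforce
  then have "t1 \<le> t2"
    using e1 e2 by auto
  moreover have from_H: "e \<in> set H \<and> ev_reg e = x" if "e \<in> set ?G" for e
    using that unfolding restr_def Hlt_def by simp
  have "ERes p1 k1 op1 res t1 \<in> set ?G" "EInv p2 k2 op2 t2 \<in> set ?G"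
    using e1 e2 ab(1,2) nth_mem[of a ?G] nth_mem[of b ?G] by auto
  then have "ERes p1 k1 op1 res t1 \<in> set H" "op_reg op1 = x"
    "EInv p2 k2 op2 t2 \<in> set H" "op_reg op2 = x"
    using from_H unfolding ev_reg_def by fastforce+
  ultimately show ?thesis
    using that by blast
qed

lemma fst_le_lex:
  fixes x y :: "'a::order \<times> 'b::order"
  shows "x \<le> y \<Longrightarrow> fst x \<le> fst y"
  by (cases x, cases y) auto

lemma ts_of_eq:
  assumes "update_records_unique (set os)" and "OUpd i k tsv \<in> set os"
  shows "ts_of os (i, k) = fst tsv"
  using assms unfolding ts_of_def update_records_unique_def
  by (metis fst_conv snd_conv the_equality)

lemma complete_invocation_has_update:
  assumes I: "abd_inv n N L G (set os)" and "complete (hist os)"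
    and "OEv (EInv i k op t) \<in> set os"
  obtains tsv where "OUpd i k tsv \<in> set os"
proof -
  have "EInv i k op t \<in> set (hist os)"
    using assms(3) by (simp add: hist_mem)
  then obtain e where "e \<in> set (hist os)" "is_res_of e (i, k)"
    using assms(2) unfolding complete_def by fastforce
  then have "OEv e \<in> set os" "is_res_of e (i, k)"
    by (simp_all add: hist_mem)
  then obtain op' res t' where "OEv (ERes i k op' res t') \<in> set os"
    by (cases e) auto
  then show ?thesis
    using inv_completions_bounded[OF I] that unfolding completions_bounded_def by blast
qed

theorem proposition1:
  fixes n f :: nat and inps :: "input list" and s :: gstate and os :: "obs list"
    and x :: reg and o1 o2 :: "pid \<times> nat"
  assumes "2 * f < n"
    and "execs n f ginit inps = Some (s, os)"
    and "complete (hist os)"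
    and "op_in (restr x (Hlt (hist os))) o1"
    and "op_in (restr x (Hlt (hist os))) o2"
    and "has_update_phase os o1"
    and "has_query_phase (hist os) o2"
    and "prec (restr x (Hlt (hist os))) o1 o2"
  shows "ts_of os o1 \<le> ts_of os o2"
proof -
  obtain p1 k1 p2 k2 where o: "o1 = (p1, k1)" "o2 = (p2, k2)"
    by fastforce
  obtain G where I: "abd_inv n (net s) (locals s) G (set os)"
    using abd_inv_reachable[OF assms(2)] by blast
  obtain op1 res t1 op2 t2 where res: "OEv (ERes p1 k1 op1 res t1) \<in> set os" and "op_reg op1 = x"
    and inv: "OEv (EInv p2 k2 op2 t2) \<in> set os" and "op_reg op2 = x" and "t1 \<le> t2"
    using prec_restr_Hlt[OF assms(8)[unfolded o], unfolded hist_mem] by blast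
  moreover obtain r t where "OEv (EInv p2 k2 (Rd r) t) \<in> set os"
    using assms(7) unfolding o has_query_phase_def by (auto simp: hist_mem elim!: is_inv_of.elims)
  ultimately have read: "OEv (EInv p2 k2 (Rd (op_reg op1)) t2) \<in> set os"
    using inv_invocations_unique[OF I] unfolding invocations_unique_def by (metis op_reg.simps(1))
  obtain tsv1 where upd1: "OUpd p1 k1 tsv1 \<in> set os"
    using assms(6) unfolding o has_update_phase_def by auto
  obtain tsv2 where upd2: "OUpd p2 k2 tsv2 \<in> set os"
    using complete_invocation_has_update[OF I assms(3) inv] by blast
  have "tsv1 \<le> tsv2"
    by (rule update_visible_to_later_read[OF I res upd1 read upd2 \<open>t1 \<le> t2\<close>])
  then show ?thesis
    unfolding o ts_of_eq[OF inv_update_records_unique[OF I] upd1]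
      ts_of_eq[OF inv_update_records_unique[OF I] upd2]
    by (rule fst_le_lex)
qed

end
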